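(* Let $A\in M_n(\mathbb{FT})$ and let $G$ and $H$ be units of $M_n(\mathbb{T})$ which commute with $A$ (under tropical multiplication). Suppose $G$ and $H$ both have maximum cycle mean $0$. Then $G\otimes H$ has maximum cycle mean $0$.
   Context: $\mathbb{FT}$ is $\mathbb{R}$ with $a\oplus b=\max(a,b)$, $a\otimes b=a+b$; $\mathbb{T}=\mathbb{R}\cup\{-\infty\}$ with the obvious extensions. Matrices multiply by $(A\otimes B)_{i,j}=\bigoplus_k A_{i,k}\otimes B_{k,j}$. Units of the monoid $M_n(\mathbb{T})$ are the matrices with exactly one entry different from $-\infty$ in each row and column. For $B\in M_n(\mathbb{T})$, $\Gamma_B$ is the weighted digraph on $\{1,\dots,n\}$ with an edge $j\to i$ of weight $B_{i,j}$ whenever $B_{i,j}\neq-\infty$; the maximum cycle mean of $B$ is the maximum, over all closed paths in $\Gamma_B$, of the arithmetic mean of the edge weights. *)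

theory Defs
  imports "HOL-Analysis.Analysis"
begin

text \<open>Tropical matrices indexed by a finite type 'n (so n = CARD('n)).
  Entries of M_n(T) are extended reals different from +infinity (MInfty plays -infinity);
  entries of M_n(FT) are reals.\<close>

type_synonym 'n tmat = "'n \<Rightarrow> 'n \<Rightarrow> ereal"

definition T_mat :: "'n tmat \<Rightarrow> bool" where
  "T_mat A \<longleftrightarrow> (\<forall>i j. A i j \<noteq> PInfty)"

definition trop_mult :: "('n::finite) tmat \<Rightarrow> 'n tmat \<Rightarrow> 'n tmat" where
  "trop_mult A B = (\<lambda>i j. Max (range (\<lambda>k. A i k + B k j)))"

definition trop_one :: "'n tmat" where
  "trop_one = (\<lambda>i j. if i = j then 0 else MInfty)"

definition FT_embed :: "('n \<Rightarrow> 'n \<Rightarrow> real) \<Rightarrow> 'n tmat" where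
  "FT_embed A = (\<lambda>i j. ereal (A i j))"

definition trop_unit :: "('n::finite) tmat \<Rightarrow> bool" where
  "trop_unit G \<longleftrightarrow> T_mat G \<and>
     (\<exists>H. T_mat H \<and> trop_mult G H = trop_one \<and> trop_mult H G = trop_one)"

text \<open>The maximum cycle mean is the
  supremum (attained, a maximum) of the means; it is -infinity if there is no cycle.\<close>
definition closed_path :: "'n tmat \<Rightarrow> (nat \<Rightarrow> 'n) \<Rightarrow> nat \<Rightarrow> bool" where
  "closed_path B p k \<longleftrightarrow> k \<ge> 1 \<and> p k = p 0 \<and> (\<forall>t<k. B (p (Suc t)) (p t) \<noteq> MInfty)"

definition cycle_means :: "'n tmat \<Rightarrow> real set" where
  "cycle_means B = {(\<Sum>t<k. real_of_ereal (B (p (Suc t)) (p t))) / real k | p k. closed_path B p k}"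

definition max_cycle_mean :: "'n tmat \<Rightarrow> ereal" where
  "max_cycle_mean B = Sup (ereal ` cycle_means B)"

end

theory Submission
  imports Defs
begin

text \<open>A unit of \<open>M\<^sub>n(\<T>)\<close> is a monomial matrix: a permutation \<sigma> with finite weights
  \<open>w i\<close> in the positions \<open>(i, \<sigma> i)\<close>. Commuting with a finite matrix A means
  \<open>w i + A (\<sigma> i) (\<sigma> j) = A i j + w j\<close>; summing over j shows that
  \<open>n w i\<close> differs from the total weight W only by the coboundary \<open>F i - F (\<sigma> i)\<close> of the
  row sums F of A. Hence every cycle of \<open>\<Gamma>\<close> has mean \<open>W / n\<close>, so the maximum cycle
  mean is the average weight. The product of two such units is again a commuting
  monomial matrix whose total weight is the sum of the two total weights.\<close>

definition monomial_mat :: "('n \<Rightarrow> 'n) \<Rightarrow> ('n \<Rightarrow> real) \<Rightarrow> 'n tmat" where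
  "monomial_mat \<sigma> w = (\<lambda>i j. if j = \<sigma> i then ereal (w i) else MInfty)"

lemma T_mat_monomial_mat: "T_mat (monomial_mat \<sigma> w)"
  by (simp add: T_mat_def monomial_mat_def)

lemma T_mat_FT_embed: "T_mat (FT_embed A)"
  by (simp add: T_mat_def FT_embed_def)

lemma Max_range_eq_single:
  fixes f :: "'n::finite \<Rightarrow> ereal"
  assumes "\<And>k. k \<noteq> k0 \<Longrightarrow> f k = MInfty"
  shows "Max (range f) = f k0"
proof (rule Max_eqI)
  fix y assume "y \<in> range f"
  then obtain k where "y = f k" by blast
  then show "y \<le> f k0"
    using assms by (cases "k = k0") auto
qed auto

lemma Max_range_eq_MInfty_iff:
  fixes f :: "'n::finite \<Rightarrow> ereal"
  shows "Max (range f) = MInfty \<longleftrightarrow> (\<forall>k. f k = MInfty)"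
  by (simp add: Max_eq_iff) (metis rangeI)

lemma trop_mult_eq_MInfty_iff:
  fixes A B :: "'n::finite tmat"
  assumes "T_mat A" "T_mat B"
  shows "trop_mult A B i j = MInfty \<longleftrightarrow> (\<forall>k. A i k = MInfty \<or> B k j = MInfty)"
proof -
  have "A i k + B k j = MInfty \<longleftrightarrow> A i k = MInfty \<or> B k j = MInfty" for k
    using assms unfolding T_mat_def by (cases "A i k"; cases "B k j") auto
  then show ?thesis
    unfolding trop_mult_def Max_range_eq_MInfty_iff by simp
qed

lemma trop_unit_support_bij:
  fixes G :: "'n::finite tmat"
  assumes "trop_unit G"
  shows "\<exists>\<sigma>. bij \<sigma> \<and> (\<forall>i j. G i j \<noteq> MInfty \<longleftrightarrow> j = \<sigma> i)"
proof -
  obtain H where TG: "T_mat G" and TH: "T_mat H"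
    and GH: "trop_mult G H = trop_one" and HG: "trop_mult H G = trop_one"
    using assms unfolding trop_unit_def by auto
  define P where "P i k \<longleftrightarrow> G i k \<noteq> MInfty" for i k
  define Q where "Q k j \<longleftrightarrow> H k j \<noteq> MInfty" for k j
  have GH_iff: "trop_mult G H i j = MInfty \<longleftrightarrow> (\<forall>k. \<not> (P i k \<and> Q k j))" for i j
    using trop_mult_eq_MInfty_iff[OF TG TH] unfolding P_def Q_def by blast
  have HG_iff: "trop_mult H G i j = MInfty \<longleftrightarrow> (\<forall>k. \<not> (Q i k \<and> P k j))" for i j
    using trop_mult_eq_MInfty_iff[OF TH TG] unfolding P_def Q_def by blast
  have one: "trop_one i j = MInfty \<longleftrightarrow> i \<noteq> j" for i j :: 'n
    by (simp add: trop_one_def)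
  have GH_diag: "\<exists>k. P i k \<and> Q k i" and GH_off: "P i k \<Longrightarrow> Q k j \<Longrightarrow> i = j"
    and HG_diag: "\<exists>i. Q k i \<and> P i k" and HG_off: "Q k i \<Longrightarrow> P i l \<Longrightarrow> k = l" for i j k l
    using GH_iff HG_iff unfolding GH HG one by blast+
  have row_unique: "P i k \<Longrightarrow> P i l \<Longrightarrow> k = l" for i k l
    using GH_diag HG_off by metis
  have col_unique: "P i k \<Longrightarrow> P i' k \<Longrightarrow> i = i'" for i i' k
    using HG_diag GH_off by metis
  define \<sigma> where "\<sigma> i = (SOME k. P i k)" for i
  have P_iff: "P i k \<longleftrightarrow> k = \<sigma> i" for i k
    using someI_ex[OF exI, of "P i"] GH_diag row_unique unfolding \<sigma>_def by metis
  have "inj \<sigma>"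
    by (rule injI) (metis P_iff col_unique)
  then have "bij \<sigma>"
    by (simp add: bij_def finite_UNIV_inj_surj)
  with P_iff show ?thesis
    unfolding P_def by blast
qed

lemma trop_unit_imp_monomial:
  fixes G :: "'n::finite tmat"
  assumes "trop_unit G"
  shows "\<exists>\<sigma> w. bij \<sigma> \<and> G = monomial_mat \<sigma> w"
proof -
  obtain \<sigma> where "bij \<sigma>" and support: "\<And>i j. G i j \<noteq> MInfty \<longleftrightarrow> j = \<sigma> i"
    using trop_unit_support_bij[OF assms] by blast
  have TG: "T_mat G"
    using assms unfolding trop_unit_def by blast
  define w where "w i = real_of_ereal (G i (\<sigma> i))" for i
  have "G i j = monomial_mat \<sigma> w i j" for i j
  proof (cases "j = \<sigma> i")
    case True
    then have "G i j \<noteq> MInfty" "G i j \<noteq> PInfty"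
      using support TG unfolding T_mat_def by auto
    then show ?thesis
      using True unfolding monomial_mat_def w_def by (cases "G i j") auto
  qed (use support in \<open>auto simp: monomial_mat_def\<close>)
  with \<open>bij \<sigma>\<close> show ?thesis by blast
qed

lemma trop_mult_monomial_left:
  fixes X :: "'n::finite tmat"
  assumes "T_mat X"
  shows "trop_mult (monomial_mat \<sigma> w) X i j = ereal (w i) + X (\<sigma> i) j"
proof -
  have "Max (range (\<lambda>k. monomial_mat \<sigma> w i k + X k j)) = monomial_mat \<sigma> w i (\<sigma> i) + X (\<sigma> i) j"
    by (rule Max_range_eq_single) (use assms in \<open>auto simp: monomial_mat_def T_mat_def\<close>)
  then show ?thesis
    by (simp add: trop_mult_def monomial_mat_def)
qed

lemma trop_mult_monomial_right:
  fixes X :: "'n::finite tmat"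
  assumes "T_mat X" "bij \<sigma>"
  shows "trop_mult X (monomial_mat \<sigma> w) i j = X i (inv \<sigma> j) + ereal (w (inv \<sigma> j))"
proof -
  have col: "j = \<sigma> k \<longleftrightarrow> k = inv \<sigma> j" for k
    using assms(2) by (metis bij_inv_eq_iff)
  have "Max (range (\<lambda>k. X i k + monomial_mat \<sigma> w k j)) = X i (inv \<sigma> j) + monomial_mat \<sigma> w (inv \<sigma> j) j"
    by (rule Max_range_eq_single) (use assms(1) col in \<open>auto simp: monomial_mat_def T_mat_def\<close>)
  then show ?thesis
    using col by (simp add: trop_mult_def monomial_mat_def)
qed

lemma trop_mult_monomial_mat:
  "trop_mult (monomial_mat \<sigma> g) (monomial_mat \<tau> h) =
     monomial_mat (\<tau> \<circ> \<sigma>) (\<lambda>i. g i + h (\<sigma> i))"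
  unfolding trop_mult_monomial_left[OF T_mat_monomial_mat] by (simp add: fun_eq_iff monomial_mat_def)

lemma monomial_mat_commutes_FT_iff:
  fixes A :: "'n::finite \<Rightarrow> 'n \<Rightarrow> real"
  assumes "bij \<sigma>"
  shows "trop_mult (monomial_mat \<sigma> w) (FT_embed A) = trop_mult (FT_embed A) (monomial_mat \<sigma> w)
    \<longleftrightarrow> (\<forall>i j. w i + A (\<sigma> i) (\<sigma> j) = A i j + w j)"
proof -
  have "trop_mult (monomial_mat \<sigma> w) (FT_embed A) i (\<sigma> j) = ereal (w i + A (\<sigma> i) (\<sigma> j))"
    "trop_mult (FT_embed A) (monomial_mat \<sigma> w) i (\<sigma> j) = ereal (A i j + w j)" for i j
    unfolding trop_mult_monomial_left[OF T_mat_FT_embed] trop_mult_monomial_right[OF T_mat_FT_embed assms]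
    using assms by (simp_all add: FT_embed_def bij_is_inj)
  moreover have "M = M' \<longleftrightarrow> (\<forall>i j. M i (\<sigma> j) = M' i (\<sigma> j))" for M M' :: "'n tmat"
    unfolding fun_eq_iff using assms by (metis bij_inv_eq_iff)
  ultimately show ?thesis
    by simp
qed

lemma closed_path_exists:
  fixes B :: "'n::finite tmat"
  assumes "\<And>j. \<exists>i. B i j \<noteq> MInfty"
  shows "\<exists>p k. closed_path B p k"
proof -
  define f where "f j = (SOME i. B i j \<noteq> MInfty)" for j
  have f_edge: "B (f j) j \<noteq> MInfty" for j
    unfolding f_def using someI_ex[OF assms] .
  define q where "q t = (f ^^ t) undefined" for t
  have "\<not> inj q"
    using finite_imageD[of q UNIV] by auto
  then obtain a b where "q a = q b" "a < b"
    unfolding inj_def by (metis linorder_neqE_nat)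
  then have "closed_path B (\<lambda>t. q (a + t)) (b - a)"
    using f_edge by (auto simp: closed_path_def q_def)
  then show ?thesis by blast
qed

text \<open>The coboundary \<open>F i - F j\<close> telescopes away along closed paths.\<close>

lemma cycle_means_subset_potential:
  fixes B :: "'n tmat" and F :: "'n \<Rightarrow> real"
  assumes "c > 0"
    and edge: "\<And>i j. B i j \<noteq> MInfty \<Longrightarrow> c * real_of_ereal (B i j) = F i - F j + W"
  shows "cycle_means B \<subseteq> {W / c}"
proof
  fix x assume "x \<in> cycle_means B"
  then obtain p k where cp: "closed_path B p k"
    and x: "x = (\<Sum>t<k. real_of_ereal (B (p (Suc t)) (p t))) / real k"
    unfolding cycle_means_def by blast
  have "c * (\<Sum>t<k. real_of_ereal (B (p (Suc t)) (p t))) = (\<Sum>t<k. F (p (Suc t)) - F (p t) + W)"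
    unfolding sum_distrib_left using cp edge by (intro sum.cong) (auto simp: closed_path_def)
  also have "\<dots> = F (p k) - F (p 0) + real k * W"
    by (simp add: sum.distrib sum_lessThan_telescope[of "\<lambda>t. F (p t)"])
  also have "\<dots> = real k * W"
    using cp by (simp add: closed_path_def)
  finally have "(\<Sum>t<k. real_of_ereal (B (p (Suc t)) (p t))) = real k * W / c"
    using \<open>c > 0\<close> by (simp add: field_simps)
  then show "x \<in> {W / c}"
    using cp x by (simp add: closed_path_def)
qed

lemma max_cycle_mean_commuting_monomial:
  fixes A :: "'n::finite \<Rightarrow> 'n \<Rightarrow> real"
  assumes "bij \<sigma>" and rel: "\<And>i j. w i + A (\<sigma> i) (\<sigma> j) = A i j + w j"
  shows "max_cycle_mean (monomial_mat \<sigma> w) = ereal (sum w UNIV / real CARD('n))"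
proof -
  define F where "F i = (\<Sum>j\<in>UNIV. A i j)" for i
  have row_sum: "real CARD('n) * w i = F i - F (\<sigma> i) + sum w UNIV" for i
  proof -
    have "(\<Sum>j\<in>UNIV. A (\<sigma> i) (\<sigma> j)) = F (\<sigma> i)"
      unfolding F_def by (rule sum.reindex_bij_betw[OF assms(1)])
    moreover have "(\<Sum>j\<in>UNIV. w i + A (\<sigma> i) (\<sigma> j)) = (\<Sum>j\<in>UNIV. A i j + w j)"
      using rel by simp
    ultimately show ?thesis
      by (simp add: F_def sum.distrib)
  qed
  have "cycle_means (monomial_mat \<sigma> w) \<subseteq> {sum w UNIV / real CARD('n)}"
    by (rule cycle_means_subset_potential[where F = F])
      (use row_sum in \<open>auto simp: monomial_mat_def split: if_splits\<close>)
  moreover have "cycle_means (monomial_mat \<sigma> w) \<noteq> {}"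
  proof -
    have "monomial_mat \<sigma> w (inv \<sigma> j) j \<noteq> MInfty" for j
      using assms(1) by (simp add: monomial_mat_def bij_is_surj surj_f_inv_f)
    then obtain p k where "closed_path (monomial_mat \<sigma> w) p k"
      using closed_path_exists by meson
    then show ?thesis
      unfolding cycle_means_def by blast
  qed
  ultimately have "cycle_means (monomial_mat \<sigma> w) = {sum w UNIV / real CARD('n)}"
    by blast
  then show ?thesis
    unfolding max_cycle_mean_def by simp
qed

theorem lemma7p7:
  fixes A :: "'n::finite \<Rightarrow> 'n \<Rightarrow> real" and G H :: "'n tmat"
  assumes "trop_unit G" and "trop_unit H"
    and "trop_mult G (FT_embed A) = trop_mult (FT_embed A) G"
    and "trop_mult H (FT_embed A) = trop_mult (FT_embed A) H"
    and "max_cycle_mean G = 0" and "max_cycle_mean H = 0"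
  shows "max_cycle_mean (trop_mult G H) = 0"
proof -
  obtain \<sigma> g where \<sigma>: "bij \<sigma>" and G: "G = monomial_mat \<sigma> g"
    using trop_unit_imp_monomial[OF assms(1)] by blast
  obtain \<tau> h where \<tau>: "bij \<tau>" and H: "H = monomial_mat \<tau> h"
    using trop_unit_imp_monomial[OF assms(2)] by blast
  have rel_g: "g i + A (\<sigma> i) (\<sigma> j) = A i j + g j" for i j
    using assms(3) monomial_mat_commutes_FT_iff[OF \<sigma>] G by blast
  have rel_h: "h i + A (\<tau> i) (\<tau> j) = A i j + h j" for i j
    using assms(4) monomial_mat_commutes_FT_iff[OF \<tau>] H by blast
  have "sum g UNIV = 0" "sum h UNIV = 0"
    using max_cycle_mean_commuting_monomial[where A = A, OF \<sigma> rel_g]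
      max_cycle_mean_commuting_monomial[where A = A, OF \<tau> rel_h]
      assms(5,6) G H by (simp_all add: zero_ereal_def)
  moreover have "(\<Sum>i\<in>UNIV. h (\<sigma> i)) = sum h UNIV"
    by (rule sum.reindex_bij_betw[OF \<sigma>])
  ultimately have "(\<Sum>i\<in>UNIV. g i + h (\<sigma> i)) = 0"
    by (simp add: sum.distrib)
  moreover have "g i + h (\<sigma> i) + A ((\<tau> \<circ> \<sigma>) i) ((\<tau> \<circ> \<sigma>) j) = A i j + (g j + h (\<sigma> j))" for i j
    using rel_g[of i j] rel_h[of "\<sigma> i" "\<sigma> j"] by simp
  ultimately show ?thesis
    using max_cycle_mean_commuting_monomial[where A = A, OF bij_comp[OF \<sigma> \<tau>]]
    by (simp add: G H trop_mult_monomial_mat zero_ereal_def)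
qed

end
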